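(* For $k\geq 0$ and $0\leq i\leq k+1$, $$f_{k+1,i}(x)=\sum_{j=0}^{i}(1+x)^{k+1-i}f_{k,j}(x)-f_{k,i}(x),$$ with initial conditions $f_{0,0}(x)=1$ and $f_{k,i}(x)=0$ for $k<i$.
   Context: An inversion sequence of length $n$ is $e=e_1\ldots e_n$ with $0\le e_i<i$. $\mathrm{asc}(e_1\ldots e_i)=|\{\ell\in[i-1]:e_\ell<e_{\ell+1}\}|$. An ascent sequence is an inversion sequence with $e_{i+1}\le \mathrm{asc}(e_1\ldots e_i)+1$ for all $i$; it is primitive if $e_i\ne e_{i+1}$ for all $i$. Let $\mathcal{PA}$ be the set of primitive ascent sequences of all lengths $\geq1$. For primitive $e$, partition $e$ into maximal strictly decreasing consecutive blocks (runs); an entry is a tail if it is the last (smallest) entry of its run. Define $\mathrm{wt}(e)=\prod_{i=1}^{\mathrm{len}(e)}\mathrm{wt}(e_i)$ with $\mathrm{wt}(e_i)=1$ if $e_i$ is a tail and $\mathrm{wt}(e_i)=x$ otherwise. A sequence avoids $\underline{12}0$ if there are no indices $2\le i<j$ with $e_j<e_{i-1}<e_i$. Let $\mathcal{PA}_{k,i}(\underline{12}0)$ be the set of $\underline{12}0$-avoiding $e\in\mathcal{PA}$ with $\mathrm{asc}(e)=k$ and last entry equal to $i$, and $f_{k,i}(x)=\sum_{e\in\mathcal{PA}_{k,i}(\underline{12}0)}\mathrm{wt}(e)$. *)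

theory Defs
  imports "HOL-Computational_Algebra.Polynomial"
begin

text \<open>Sequences are lists of naturals, indexed from 0: entry e_(p+1) of the paper is e ! p.\<close>

definition asc :: "nat list \<Rightarrow> nat" where
  "asc e = card {l. Suc l < length e \<and> e ! l < e ! Suc l}"

definition inversion_seq :: "nat list \<Rightarrow> bool" where
  "inversion_seq e \<longleftrightarrow> (\<forall>p < length e. e ! p \<le> p)"

definition ascent_seq :: "nat list \<Rightarrow> bool" where
  "ascent_seq e \<longleftrightarrow> inversion_seq e \<and>
     (\<forall>p. 1 \<le> p \<and> p < length e \<longrightarrow> e ! p \<le> asc (take p e) + 1)"

definition primitive :: "nat list \<Rightarrow> bool" where
  "primitive e \<longleftrightarrow> (\<forall>p. Suc p < length e \<longrightarrow> e ! p \<noteq> e ! Suc p)"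

definition PA :: "nat list set" where
  "PA = {e. length e \<ge> 1 \<and> ascent_seq e \<and> primitive e}"

text \<open>Position p is a tail iff it is the last entry of its maximal strictly
decreasing run, i.e. it is the last position or the next entry is not smaller.\<close>
definition is_tail :: "nat list \<Rightarrow> nat \<Rightarrow> bool" where
  "is_tail e p \<longleftrightarrow> Suc p = length e \<or> \<not> (e ! Suc p < e ! p)"

definition wt :: "nat list \<Rightarrow> int poly" where
  "wt e = (\<Prod>p<length e. if is_tail e p then 1 else [:0, 1:])"

text \<open>Avoidance of the vincular pattern 12_0 (paper indices 2 \<le> i < j, shifted by one).\<close>
definition avoids_12_0 :: "nat list \<Rightarrow> bool" where
  "avoids_12_0 e \<longleftrightarrow>
     \<not> (\<exists>i j. 1 \<le> i \<and> i < j \<and> j < length e \<and> e ! j < e ! (i - 1) \<and> e ! (i - 1) < e ! i)"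

definition PA_ki :: "nat \<Rightarrow> nat \<Rightarrow> nat list set" where
  "PA_ki k i = {e \<in> PA. avoids_12_0 e \<and> asc e = k \<and> last e = i}"

definition f :: "nat \<Rightarrow> nat \<Rightarrow> int poly" where
  "f k i = (\<Sum>e\<in>PA_ki k i. wt e)"

end

theory Submission
  imports Defs
begin

text \<open>A sequence in PA_ki (k+1) i splits uniquely at its last ascent into a prefix in
PA_ki k j and a strictly decreasing final run ending in i. Avoidance of 12_0 forces j \<le> i, the
ascent condition at the junction bounds the run by k+1, and the run is determined by the set
S \<subseteq> {i+1..k+1} of its entries other than i, each contributing one factor x to the weight.
Primitivity excludes S = {} exactly when j = i, so summing x^|S| over S gives
(1+x)^(k+1-i), minus 1 when j = i.\<close>

definition adj_count :: "('a \<Rightarrow> 'a \<Rightarrow> bool) \<Rightarrow> 'a list \<Rightarrow> nat" where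
  "adj_count R e = length (filter (case_prod R) (zip e (tl e)))"

lemma adj_count_conv_card:
  "adj_count R e = card {l. Suc l < length e \<and> R (e ! l) (e ! Suc l)}"
  unfolding adj_count_def length_filter_conv_card
  by (intro arg_cong[where f = card] Collect_cong) (auto simp: nth_tl)

lemma adj_count_Nil [simp]: "adj_count R [] = 0"
  and adj_count_single [simp]: "adj_count R [a] = 0"
  and adj_count_Cons_Cons [simp]: "adj_count R (a # b # e) = of_bool (R a b) + adj_count R (b # e)"
  by (simp_all add: adj_count_def)

lemma adj_count_append:
  "adj_count R (xs @ ys) =
     adj_count R xs + of_bool (xs \<noteq> [] \<and> ys \<noteq> [] \<and> R (last xs) (hd ys)) + adj_count R ys"
  by (induction xs rule: induct_list012) (cases ys; auto)+

lemma adj_count_less_length: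
  assumes "e \<noteq> []"
  shows "adj_count R e < length e"
proof -
  have "adj_count R e \<le> length (zip e (tl e))"
    unfolding adj_count_def by (rule length_filter_le)
  with assms show ?thesis by (cases e) auto
qed

lemma adj_count_sorted_wrt: "sorted_wrt R e \<Longrightarrow> adj_count R e = length e - 1"
  by (induction e rule: induct_list012) auto

lemma adj_count_eq_0_iff: "adj_count R e = 0 \<longleftrightarrow> (\<forall>l. Suc l < length e \<longrightarrow> \<not> R (e ! l) (e ! Suc l))"
  unfolding adj_count_conv_card
  by (auto simp: card_eq_0_iff intro: finite_subset[of _ "{..<length e}"])

lemma asc_conv_adj_count: "asc e = adj_count (<) e"
  unfolding asc_def adj_count_conv_card ..

lemma primitive_iff_adj_count: "primitive e \<longleftrightarrow> adj_count (=) e = 0"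
  unfolding primitive_def adj_count_eq_0_iff by simp

lemma wt_conv_adj_count: "wt e = [:0, 1:] ^ adj_count (\<lambda>a b. b < a) e"
proof -
  have "wt e = (\<Prod>p\<in>{..<length e} \<inter> - {p. is_tail e p}. [:0, 1:])"
    unfolding wt_def by (simp add: prod.If_cases)
  also have "{..<length e} \<inter> - {p. is_tail e p} = {l. Suc l < length e \<and> e ! Suc l < e ! l}"
    unfolding is_tail_def by auto
  finally show ?thesis
    unfolding adj_count_conv_card by (simp only: prod_constant)
qed

lemma sorted_wrt_greater_iff_asc_primitive:
  "sorted_wrt (>) (e :: nat list) \<longleftrightarrow> asc e = 0 \<and> primitive e"
  unfolding asc_conv_adj_count primitive_iff_adj_count
  by (induction e rule: induct_list012) (auto simp: sorted_wrt2[of "(>)"])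

lemma sorted_wrt_greater_last_le_hd:
  "sorted_wrt (>) (ys :: 'a :: order list) \<Longrightarrow> y \<in> set ys \<Longrightarrow> last ys \<le> y \<and> y \<le> hd ys"
  by (induction ys) (auto dest: last_in_set less_imp_le)

lemma asc_append_le: "asc xs \<le> asc (xs @ ys)"
  unfolding asc_conv_adj_count adj_count_append by simp

lemma asc_append_decreasing:
  assumes "xs \<noteq> []" "ys \<noteq> []" "sorted_wrt (>) ys" "last xs < hd ys"
  shows "asc (xs @ ys) = Suc (asc xs)"
  using assms sorted_wrt_greater_iff_asc_primitive[of ys]
  unfolding asc_conv_adj_count adj_count_append by simp

lemma wt_append_decreasing:
  assumes "xs \<noteq> []" "ys \<noteq> []" "sorted_wrt (>) ys" "last xs < hd ys"
  shows "wt (xs @ ys) = wt xs * [:0, 1:] ^ (length ys - 1)"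
  using assms adj_count_sorted_wrt[of "(>)" ys]
  unfolding wt_conv_adj_count adj_count_append by (simp add: power_add)

lemma primitive_append_iff:
  "primitive (xs @ ys) \<longleftrightarrow> primitive xs \<and> primitive ys \<and> (xs \<noteq> [] \<and> ys \<noteq> [] \<longrightarrow> last xs \<noteq> hd ys)"
  unfolding primitive_iff_adj_count adj_count_append by auto

lemma ascent_seq_take: "ascent_seq e \<Longrightarrow> ascent_seq (take q e)"
  unfolding ascent_seq_def inversion_seq_def by (auto simp: min_def)

lemma ascent_seq_appendD: "ascent_seq (xs @ ys) \<Longrightarrow> ascent_seq xs"
  using ascent_seq_take[of "xs @ ys" "length xs"] by simp

lemma avoids_12_0_take: "avoids_12_0 e \<Longrightarrow> avoids_12_0 (take q e)"
  unfolding avoids_12_0_def by auto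

lemma avoids_12_0_appendD: "avoids_12_0 (xs @ ys) \<Longrightarrow> avoids_12_0 xs"
  using avoids_12_0_take[of "xs @ ys" "length xs"] by simp

lemma last_le_asc: "ascent_seq e \<Longrightarrow> e \<noteq> [] \<Longrightarrow> last e \<le> asc e"
proof (induction e rule: rev_induct)
  case (snoc x xs)
  show ?case
  proof (cases "xs = []")
    case True
    then show ?thesis using snoc.prems unfolding ascent_seq_def inversion_seq_def by auto
  next
    case False
    have "ascent_seq xs" using snoc.prems(1) by (rule ascent_seq_appendD)
    moreover have "x \<le> asc xs + 1"
      using snoc.prems False unfolding ascent_seq_def
      by (auto dest!: spec[of _ "length xs"] simp: nth_append Suc_le_eq)
    moreover have "asc (xs @ [x]) = asc xs + of_bool (last xs < x)"
      using False unfolding asc_conv_adj_count adj_count_append by simp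
    ultimately show ?thesis using snoc.IH False by auto
  qed
qed simp

lemma ascent_seq_append_decreasing_iff:
  assumes xs: "xs \<noteq> []" and ys: "ys \<noteq> []" "sorted_wrt (>) ys"
  shows "ascent_seq (xs @ ys) \<longleftrightarrow> ascent_seq xs \<and> hd ys \<le> asc xs + 1"
proof
  assume asc_seq: "ascent_seq (xs @ ys)"
  have "(xs @ ys) ! length xs \<le> asc (take (length xs) (xs @ ys)) + 1"
    using asc_seq xs ys unfolding ascent_seq_def
    by (auto dest!: spec[of _ "length xs"] simp: Suc_le_eq)
  then show "ascent_seq xs \<and> hd ys \<le> asc xs + 1"
    using asc_seq ys by (simp add: ascent_seq_appendD nth_append hd_conv_nth)
next
  assume "ascent_seq xs \<and> hd ys \<le> asc xs + 1"
  then have asc_xs: "ascent_seq xs" and hd_le: "hd ys \<le> asc xs + 1" by auto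
  have "asc xs + 1 \<le> length xs"
    using adj_count_less_length[OF xs, of "(<)"] unfolding asc_conv_adj_count by simp
  have late: "(xs @ ys) ! p \<le> asc xs + 1" if "length xs \<le> p" "p < length (xs @ ys)" for p
    using that hd_le sorted_wrt_greater_last_le_hd[OF ys(2), of "ys ! (p - length xs)"]
    by (simp add: nth_append)
  show "ascent_seq (xs @ ys)"
    unfolding ascent_seq_def inversion_seq_def
  proof (intro conjI allI impI)
    fix p assume p: "p < length (xs @ ys)"
    show "(xs @ ys) ! p \<le> p"
    proof (cases "p < length xs")
      case True
      then show ?thesis
        using asc_xs unfolding ascent_seq_def inversion_seq_def by (simp add: nth_append)
    next
      case False
      then show ?thesis using late[OF _ p] \<open>asc xs + 1 \<le> length xs\<close> by simp
    qed
  next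
    fix p assume p: "1 \<le> p \<and> p < length (xs @ ys)"
    show "(xs @ ys) ! p \<le> asc (take p (xs @ ys)) + 1"
    proof (cases "p < length xs")
      case True
      then show ?thesis using asc_xs p unfolding ascent_seq_def by (simp add: nth_append)
    next
      case False
      then have "asc xs \<le> asc (take p (xs @ ys))" by (simp add: asc_append_le)
      then show ?thesis using late[of p] False p by simp
    qed
  qed
qed

lemma avoids_12_0_ascent_le_last:
  assumes "avoids_12_0 e" "Suc p < length e" "e ! p < e ! Suc p"
  shows "e ! p \<le> last e"
proof -
  have last_e: "last e = e ! (length e - 1)"
    using assms(2) by (intro last_conv_nth) auto
  show ?thesis
  proof (cases "Suc p = length e - 1")
    case True
    then show ?thesis using assms(3) last_e by simp
  next
    case False
    have "\<not> (1 \<le> Suc p \<and> Suc p < length e - 1 \<and> length e - 1 < length e \<and>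
        e ! (length e - 1) < e ! (Suc p - 1) \<and> e ! (Suc p - 1) < e ! Suc p)"
      using assms(1) unfolding avoids_12_0_def by blast
    then show ?thesis using False assms(2,3) last_e by auto
  qed
qed

lemma avoids_12_0_append_decreasing:
  assumes xs: "avoids_12_0 xs" "xs \<noteq> []" and ys: "sorted_wrt (>) ys"
    and last_le: "last xs \<le> last ys"
  shows "avoids_12_0 (xs @ ys)"
  unfolding avoids_12_0_def
proof clarify
  fix i j
  let ?e = "xs @ ys" and ?m = "length xs"
  assume ij: "1 \<le> i" "i < j" "j < length ?e"
    and pattern: "?e ! j < ?e ! (i - 1)" "?e ! (i - 1) < ?e ! i"
  show False
  proof (cases "j < ?m")
    case True
    then have "i - 1 < ?m" "i < ?m" using ij by auto
    with True have "xs ! j < xs ! (i - 1) \<and> xs ! (i - 1) < xs ! i"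
      using pattern by (simp add: nth_append)
    then show False using xs(1) ij True unfolding avoids_12_0_def by blast
  next
    case False
    then have "last ys \<le> ?e ! j"
      using ij sorted_wrt_greater_last_le_hd[OF ys, of "ys ! (j - ?m)"] by (simp add: nth_append)
    moreover have "?e ! (i - 1) \<le> last ys"
    proof (cases "i < ?m")
      case True
      moreover have "i - 1 < ?m" "Suc (i - 1) = i" using True ij by auto
      ultimately have "xs ! (i - 1) \<le> last xs"
        using avoids_12_0_ascent_le_last[OF xs(1), of "i - 1"] pattern by (simp add: nth_append)
      then show ?thesis using \<open>i - 1 < ?m\<close> last_le by (simp add: nth_append)
    next
      case False
      show ?thesis
      proof (cases "i = ?m")
        case True
        then show ?thesis using xs(2) last_le by (simp add: nth_append last_conv_nth)
      next
        case False
        then have "ys ! (i - ?m) < ys ! (i - 1 - ?m)"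
          using \<open>\<not> i < ?m\<close> ij sorted_wrt_nth_less[OF ys, of "i - 1 - ?m" "i - ?m"] by simp
        moreover have "\<not> i - 1 < ?m" using \<open>\<not> i < ?m\<close> False by simp
        ultimately show ?thesis using pattern \<open>\<not> i < ?m\<close> by (simp add: nth_append)
      qed
    qed
    ultimately show False using pattern by simp
  qed
qed

lemma avoids_12_0_append_decreasing_iff:
  assumes "xs \<noteq> []" "ys \<noteq> []" "sorted_wrt (>) ys" "last xs < hd ys"
  shows "avoids_12_0 (xs @ ys) \<longleftrightarrow> avoids_12_0 xs \<and> last xs \<le> last ys"
proof
  assume av: "avoids_12_0 (xs @ ys)"
  have "(xs @ ys) ! (length xs - 1) = last xs" "(xs @ ys) ! Suc (length xs - 1) = hd ys"
    using assms(1,2) by (simp_all add: nth_append last_conv_nth hd_conv_nth)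
  then have "last xs \<le> last (xs @ ys)"
    using avoids_12_0_ascent_le_last[OF av, of "length xs - 1"] assms by simp
  then show "avoids_12_0 xs \<and> last xs \<le> last ys"
    using av assms(2) by (simp add: avoids_12_0_appendD)
next
  assume "avoids_12_0 xs \<and> last xs \<le> last ys"
  then show "avoids_12_0 (xs @ ys)" using assms avoids_12_0_append_decreasing by blast
qed

lemma PA_ki_last: "e \<in> PA_ki k j \<Longrightarrow> last e = j"
  unfolding PA_ki_def by simp

lemma PA_ki_empty: "k < i \<Longrightarrow> PA_ki k i = {}"
  unfolding PA_ki_def PA_def using last_le_asc by fastforce

lemma PA_asc_eq_0D:
  assumes e: "e \<in> PA" "asc e = 0"
  shows "e = [0]"
proof -
  obtain a rest where a: "e = a # rest" using e(1) unfolding PA_def by (cases e) auto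
  have "a = 0" using e(1) a unfolding PA_def ascent_seq_def inversion_seq_def by auto
  moreover have "sorted_wrt (>) e"
    using e unfolding PA_def sorted_wrt_greater_iff_asc_primitive by simp
  ultimately show ?thesis using a by (cases rest) auto
qed

lemma PA_ki_0: "PA_ki 0 i = (if i = 0 then {[0]} else {})"
proof -
  have "[0] \<in> PA" unfolding PA_def ascent_seq_def inversion_seq_def primitive_def by simp
  moreover have "avoids_12_0 [0]" unfolding avoids_12_0_def by auto
  ultimately have "[0] \<in> PA_ki 0 0" unfolding PA_ki_def by (simp add: asc_conv_adj_count)
  moreover have "PA_ki 0 i \<subseteq> {[0]}" using PA_asc_eq_0D unfolding PA_ki_def by blast
  ultimately show ?thesis using PA_ki_last[of "[0]" 0] by auto
qed

lemma append_decreasing_in_PA_ki_iff: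
  assumes "xs \<noteq> []" "ys \<noteq> []" "sorted_wrt (>) ys" "last xs < hd ys"
  shows "xs @ ys \<in> PA_ki (Suc k) i \<longleftrightarrow>
    xs \<in> PA_ki k (last xs) \<and> last xs \<le> i \<and> last ys = i \<and> hd ys \<le> Suc k"
proof -
  have "primitive ys" using assms(3) sorted_wrt_greater_iff_asc_primitive by blast
  then show ?thesis
    using assms unfolding PA_ki_def PA_def
    by (auto simp: ascent_seq_append_decreasing_iff primitive_append_iff
        avoids_12_0_append_decreasing_iff asc_append_decreasing Suc_le_eq)
qed

lemma last_ascent_split:
  assumes "asc e \<noteq> 0"
  obtains xs ys where "e = xs @ ys" "xs \<noteq> []" "ys \<noteq> []" "last xs < hd ys" "asc ys = 0"
  using assms
proof (induction e arbitrary: thesis rule: rev_induct)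
  case Nil
  then show ?case by (simp add: asc_conv_adj_count)
next
  case (snoc x e)
  show ?case
  proof (cases "e \<noteq> [] \<and> last e < x")
    case True
    then show ?thesis using snoc.prems(1)[of e "[x]"] by (simp add: asc_conv_adj_count)
  next
    case False
    then have "asc (e @ [x]) = asc e" unfolding asc_conv_adj_count adj_count_append by auto
    with snoc.prems(2) have "asc e \<noteq> 0" by simp
    then obtain xs ys
      where split: "e = xs @ ys" "xs \<noteq> []" "ys \<noteq> []" "last xs < hd ys" "asc ys = 0"
      using snoc.IH by blast
    have "asc (ys @ [x]) = 0"
      using split False unfolding asc_conv_adj_count adj_count_append by auto
    then show ?thesis using snoc.prems(1)[of xs "ys @ [x]"] split by simp
  qed
qed

lemma last_ascent_split_unique:
  assumes eq: "xs1 @ ys1 = xs2 @ ys2"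
    and split1: "xs1 \<noteq> []" "ys1 \<noteq> []" "last xs1 < hd ys1" "asc ys1 = 0"
    and split2: "xs2 \<noteq> []" "ys2 \<noteq> []" "last xs2 < hd ys2" "asc ys2 = 0"
  shows "xs1 = xs2 \<and> ys1 = ys2"
proof -
  \<comment> \<open>a longer prefix would put its final ascent inside the other final run\<close>
  have no_overlap: "us = []"
    if "xs = xs' @ us" "ys' = us @ ys" "xs \<noteq> []" "ys \<noteq> []" "last xs < hd ys" "asc ys' = 0"
    for xs ys xs' ys' us :: "nat list"
    using that unfolding asc_conv_adj_count
    by (auto simp: adj_count_append last_append split: if_splits)
  obtain us where "xs1 = xs2 @ us \<and> us @ ys1 = ys2 \<or> xs1 @ us = xs2 \<and> ys1 = us @ ys2"
    using append_eq_append_conv2[THEN iffD1, OF eq] by blast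
  then show ?thesis
  proof
    assume overlap: "xs1 = xs2 @ us \<and> us @ ys1 = ys2"
    then have "us = []" using no_overlap[of xs1 xs2 us ys2 ys1] split1 split2 by blast
    with overlap show ?thesis by simp
  next
    assume overlap: "xs1 @ us = xs2 \<and> ys1 = us @ ys2"
    then have "us = []" using no_overlap[of xs2 xs1 us ys1 ys2] split1 split2 by blast
    with overlap show ?thesis by simp
  qed
qed

definition desc_run :: "nat \<Rightarrow> nat set \<Rightarrow> nat list" where
  "desc_run i S = rev (sorted_list_of_set S) @ [i]"

lemma desc_run_ne [simp]: "desc_run i S \<noteq> []"
  and last_desc_run [simp]: "last (desc_run i S) = i"
  unfolding desc_run_def by simp_all

lemma set_desc_run: "finite S \<Longrightarrow> set (desc_run i S) = insert i S"
  unfolding desc_run_def by auto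

lemma length_desc_run: "finite S \<Longrightarrow> length (desc_run i S) = Suc (card S)"
  unfolding desc_run_def by simp

lemma sorted_desc_run: "finite S \<Longrightarrow> \<forall>x\<in>S. i < x \<Longrightarrow> sorted_wrt (>) (desc_run i S)"
  unfolding desc_run_def by (simp add: sorted_wrt_append sorted_wrt_rev)

lemma desc_run_set:
  assumes "sorted_wrt (>) ys" "ys \<noteq> []"
  shows "desc_run (last ys) (set ys - {last ys}) = ys"
proof -
  obtain zs i where ys: "ys = zs @ [i]" using assms(2) by (cases ys rule: rev_cases) auto
  then have "sorted_wrt (>) zs" "\<forall>z\<in>set zs. i < z"
    using assms(1) by (simp_all add: sorted_wrt_append)
  then have "sorted_wrt (<) (rev zs)" by (simp add: sorted_wrt_rev)
  then have "sorted_list_of_set (set (rev zs)) = rev zs"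
    unfolding sorted_list_of_set_sort_remdups strict_sorted_iff
    by (simp add: distinct_remdups_id sorted_sort_id)
  moreover have "set ys - {last ys} = set zs" using ys \<open>\<forall>z\<in>set zs. i < z\<close> by auto
  ultimately show ?thesis unfolding desc_run_def ys by simp
qed

text \<open>S is the set of entries of the final run other than its last entry i; the run [i]
(S = {}) may only follow a prefix not ending in i.\<close>

definition run_sets :: "nat \<Rightarrow> nat \<Rightarrow> nat \<Rightarrow> nat set set" where
  "run_sets k i j = {S. S \<subseteq> {Suc i..Suc k} \<and> (S \<noteq> {} \<or> j \<noteq> i)}"

lemma desc_run_of_run_sets:
  assumes "S \<in> run_sets k i j" "j \<le> i" "i \<le> Suc k"
  shows "sorted_wrt (>) (desc_run i S)" "j < hd (desc_run i S)" "hd (desc_run i S) \<le> Suc k"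
    and "length (desc_run i S) = Suc (card S)"
proof -
  have S: "S \<subseteq> {Suc i..Suc k}" "S \<noteq> {} \<or> j \<noteq> i"
    using assms(1) unfolding run_sets_def by auto
  have fin: "finite S" using S(1) by (rule finite_subset) simp
  show sorted: "sorted_wrt (>) (desc_run i S)" using S fin by (intro sorted_desc_run) auto
  have hd_in: "hd (desc_run i S) \<in> insert i S"
    using set_desc_run[OF fin] hd_in_set[OF desc_run_ne] by metis
  then show "hd (desc_run i S) \<le> Suc k" using S assms(3) by auto
  show "j < hd (desc_run i S)"
  proof (cases "S = {}")
    case True
    then show ?thesis using hd_in S(2) assms(2) by simp
  next
    case False
    then obtain y where "y \<in> S" by auto
    then have "y \<le> hd (desc_run i S)"
      using sorted_wrt_greater_last_le_hd[OF sorted] set_desc_run[OF fin] by blast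
    then show ?thesis using \<open>y \<in> S\<close> S(1) assms(2) by auto
  qed
  show "length (desc_run i S) = Suc (card S)" using fin by (rule length_desc_run)
qed

lemma PA_ki_ne: "e \<in> PA_ki k j \<Longrightarrow> e \<noteq> []"
  unfolding PA_ki_def PA_def by auto

lemma append_desc_run_in_PA_ki:
  assumes "e \<in> PA_ki k j" "j \<le> i" "i \<le> Suc k" "S \<in> run_sets k i j"
  shows "e @ desc_run i S \<in> PA_ki (Suc k) i"
  using assms desc_run_of_run_sets[OF assms(4,2,3)] PA_ki_ne[OF assms(1)] PA_ki_last[OF assms(1)]
  by (subst append_decreasing_in_PA_ki_iff) auto

lemma wt_append_desc_run:
  assumes "e \<in> PA_ki k j" "j \<le> i" "i \<le> Suc k" "S \<in> run_sets k i j"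
  shows "wt (e @ desc_run i S) = wt e * [:0, 1:] ^ card S"
  using assms desc_run_of_run_sets[OF assms(4,2,3)] PA_ki_ne[OF assms(1)] PA_ki_last[OF assms(1)]
  by (subst wt_append_decreasing) auto

lemma PA_ki_Suc_split:
  assumes "E \<in> PA_ki (Suc k) i"
  obtains e S where "e \<in> PA_ki k (last e)" "last e \<le> i" "S \<in> run_sets k i (last e)"
    "E = e @ desc_run i S"
proof -
  have "asc E = Suc k" using assms unfolding PA_ki_def by simp
  then obtain e ys where split: "E = e @ ys" "e \<noteq> []" "ys \<noteq> []" "last e < hd ys" "asc ys = 0"
    using last_ascent_split by (metis nat.distinct(1))
  have "primitive ys"
    using assms split(1) unfolding PA_ki_def PA_def by (simp add: primitive_append_iff)
  then have sorted: "sorted_wrt (>) ys" using split(5) sorted_wrt_greater_iff_asc_primitive by blast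
  then have e: "e \<in> PA_ki k (last e)" "last e \<le> i" and ys: "last ys = i" "hd ys \<le> Suc k"
    using assms append_decreasing_in_PA_ki_iff[OF split(2,3) sorted split(4)] split(1) by auto
  define S where "S = set ys - {i}"
  have run: "desc_run i S = ys" unfolding S_def using desc_run_set[OF sorted split(3)] ys(1) by simp
  have "S \<subseteq> {Suc i..Suc k}"
    unfolding S_def using sorted_wrt_greater_last_le_hd[OF sorted] ys by fastforce
  moreover have "S \<noteq> {} \<or> last e \<noteq> i"
    using run split(4) unfolding desc_run_def by auto
  ultimately have "S \<in> run_sets k i (last e)" unfolding run_sets_def by simp
  with e show thesis using that run split(1) by simp
qed

lemma bij_betw_append_desc_run:
  assumes "i \<le> Suc k"
  shows "bij_betw (\<lambda>(j, e, S). e @ desc_run i S)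
    (SIGMA j:{..i}. PA_ki k j \<times> run_sets k i j) (PA_ki (Suc k) i)"
proof -
  let ?g = "\<lambda>(j, e, S). e @ desc_run i S" and ?D = "SIGMA j:{..i}. PA_ki k j \<times> run_sets k i j"
  have "inj_on ?g ?D"
  proof (rule inj_onI)
    fix x y assume "x \<in> ?D" "y \<in> ?D" and eq: "?g x = ?g y"
    then obtain j1 e1 S1 j2 e2 S2
      where x: "x = (j1, e1, S1)" "j1 \<le> i" "e1 \<in> PA_ki k j1" "S1 \<in> run_sets k i j1"
        and y: "y = (j2, e2, S2)" "j2 \<le> i" "e2 \<in> PA_ki k j2" "S2 \<in> run_sets k i j2"
      by auto
    have "e1 = e2 \<and> desc_run i S1 = desc_run i S2"
      using eq x y desc_run_of_run_sets[OF x(4,2) assms] desc_run_of_run_sets[OF y(4,2) assms]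
        PA_ki_ne PA_ki_last sorted_wrt_greater_iff_asc_primitive
      by (intro last_ascent_split_unique) auto
    moreover have "S1 = set (desc_run i S1) - {i}" "S2 = set (desc_run i S2) - {i}"
      using x(4) y(4) unfolding run_sets_def by (auto simp: set_desc_run finite_subset)
    ultimately show "x = y" using x y PA_ki_last by metis
  qed
  moreover have "?g ` ?D \<subseteq> PA_ki (Suc k) i" using append_desc_run_in_PA_ki assms by auto
  moreover have "PA_ki (Suc k) i \<subseteq> ?g ` ?D"
  proof
    fix E assume "E \<in> PA_ki (Suc k) i"
    then obtain e S where "e \<in> PA_ki k (last e)" "last e \<le> i" "S \<in> run_sets k i (last e)"
      "E = e @ desc_run i S"
      by (rule PA_ki_Suc_split)
    then show "E \<in> ?g ` ?D" by (intro image_eqI[of _ _ "(last e, e, S)"]) auto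
  qed
  ultimately show ?thesis unfolding bij_betw_def by blast
qed

lemma finite_run_sets: "finite (run_sets k i j)"
  unfolding run_sets_def by (rule finite_subset[of _ "Pow {Suc i..Suc k}"]) auto

lemma finite_PA_ki: "finite (PA_ki k i)"
proof (induction k arbitrary: i)
  case 0
  then show ?case by (simp add: PA_ki_0)
next
  case (Suc k)
  show ?case
  proof (cases "i \<le> Suc k")
    case True
    have "finite (SIGMA j:{..i}. PA_ki k j \<times> run_sets k i j)"
      using Suc.IH finite_run_sets by blast
    then show ?thesis using bij_betw_finite[OF bij_betw_append_desc_run[OF True]] by blast
  next
    case False
    then show ?thesis by (simp add: PA_ki_empty)
  qed
qed

lemma sum_power_card_Pow:
  fixes x :: "'a :: comm_semiring_1"
  assumes "finite A"
  shows "(\<Sum>S\<in>Pow A. x ^ card S) = (x + 1) ^ card A"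
  using prod_add[OF assms, of "\<lambda>_. x" "\<lambda>_. 1"] by simp

lemma sum_run_sets:
  "(\<Sum>S\<in>run_sets k i j. [:0, 1 :: 'a :: comm_ring_1:] ^ card S) =
     [:1, 1:] ^ (Suc k - i) - of_bool (j = i)"
proof -
  have "run_sets k i j = Pow {Suc i..Suc k} - (if j = i then {{}} else {})"
    unfolding run_sets_def by auto
  moreover have "(\<Sum>S\<in>Pow {Suc i..Suc k}. [:0, 1:] ^ card S) = [:1, 1 :: 'a:] ^ (Suc k - i)"
    using sum_power_card_Pow[of "{Suc i..Suc k}" "[:0, 1 :: 'a:]"] by (simp add: one_pCons)
  ultimately show ?thesis by (simp add: sum_diff1)
qed

lemma f_Suc:
  assumes "i \<le> Suc k"
  shows "f (Suc k) i = (\<Sum>j = 0..i. [:1, 1:] ^ (Suc k - i) * f k j) - f k i"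
proof -
  let ?runs = "\<lambda>j. PA_ki k j \<times> run_sets k i j"
  have "f (Suc k) i = (\<Sum>x\<in>(SIGMA j:{..i}. ?runs j). wt ((\<lambda>(j, e, S). e @ desc_run i S) x))"
    unfolding f_def by (rule sum.reindex_bij_betw[OF bij_betw_append_desc_run[OF assms], symmetric])
  also have "\<dots> = (\<Sum>(j, e, S)\<in>(SIGMA j:{..i}. ?runs j). wt e * [:0, 1:] ^ card S)"
    by (rule sum.cong) (auto simp: wt_append_desc_run assms)
  also have "\<dots> = (\<Sum>j\<le>i. \<Sum>(e, S)\<in>?runs j. wt e * [:0, 1:] ^ card S)"
    by (rule sum.Sigma[symmetric]) (auto simp: finite_PA_ki finite_run_sets)
  also have "\<dots> = (\<Sum>j\<le>i. f k j * ([:1, 1:] ^ (Suc k - i) - of_bool (j = i)))"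
    by (simp add: f_def sum.cartesian_product[symmetric] sum_product[symmetric] sum_run_sets)
  also have "\<dots> = (\<Sum>j = 0..i. [:1, 1:] ^ (Suc k - i) * f k j) - f k i"
    by (simp add: algebra_simps sum_subtractf atLeast0AtMost)
  finally show ?thesis .
qed

theorem lemma2p2:
  shows "(\<forall>k i. i \<le> k + 1 \<longrightarrow>
            f (k + 1) i = (\<Sum>j = 0..i. [:1, 1:] ^ (k + 1 - i) * f k j) - f k i)
         \<and> f 0 0 = 1
         \<and> (\<forall>k i. k < i \<longrightarrow> f k i = 0)"
proof (intro conjI allI impI)
  fix k i :: nat
  assume "i \<le> k + 1"
  then show "f (k + 1) i = (\<Sum>j = 0..i. [:1, 1:] ^ (k + 1 - i) * f k j) - f k i"
    using f_Suc[of i k] by simp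
next
  show "f 0 0 = 1" unfolding f_def PA_ki_0 wt_def is_tail_def by simp
next
  fix k i :: nat
  assume "k < i"
  then show "f k i = 0" unfolding f_def by (simp add: PA_ki_empty)
qed

end
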